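(* For every $t\in\mathbb C$, $$\phi_{t,-t}\odot\phi_{1,t-2}=\frac{1}{\Gamma(t+1)}\,\delta_1,$$ where $\delta_1$ is the Dirac mass at $1$.
   Context: For $a\in\mathbb C$, $\phi_a(u)=u_+^a/\Gamma(a+1)$ is the distribution on $\mathbb R$ supported on $[0,\infty)$, defined for $\operatorname{Re}a>-1$ as a locally integrable function and for other $a$ by analytic continuation in $a$. For $a,b\in\mathbb C$, $\phi_{ab}(u)=\phi_a(u)\phi_b(1-u)$, a distribution supported on $[0,1]$. For compactly supported distributions $A,B$ on $\mathbb R$, the pseudoconvolution $A\odot B$ is the distribution defined by $\langle A\odot B,\psi\rangle=\langle A(y_1)\otimes B(y_2),\psi(y_1y_2)\rangle$ for smooth test functions $\psi$. *)

theory Defs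
  imports "HOL-Analysis.Analysis"
begin

definition smooth_fun :: "(real \<Rightarrow> complex) \<Rightarrow> bool" where
  "smooth_fun f \<longleftrightarrow> (\<exists>D :: nat \<Rightarrow> real \<Rightarrow> complex. D 0 = f \<and>
      (\<forall>n x. (D n has_vector_derivative D (Suc n) x) (at x)))"

definition test_fun :: "(real \<Rightarrow> complex) \<Rightarrow> bool" where
  "test_fun f \<longleftrightarrow> smooth_fun f \<and> compact (closure {x. f x \<noteq> 0})"

text \<open>For Re a > -1 and Re b > -1, phi_{ab} is the locally integrable function
  u_+^a (1-u)_+^b / (Gamma(a+1) Gamma(b+1)), supported on [0,1]; pairing with a
  smooth function psi.  (rGamma is the entire reciprocal Gamma function.)\<close>
definition phi2_int :: "complex \<Rightarrow> complex \<Rightarrow> (real \<Rightarrow> complex) \<Rightarrow> complex" where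
  "phi2_int a b \<psi> = integral {0<..<1}
     (\<lambda>u. (complex_of_real u powr a) * (complex_of_real (1 - u) powr b)
           * rGamma (a + 1) * rGamma (b + 1) * \<psi> u)"

text \<open>For general a, b: analytic continuation in (a,b), i.e. the value at (a,b) of
  the (unique) function, entire in each variable separately, which agrees with
  phi2_int on Re a > -1, Re b > -1.  phi2 a b is the compactly supported distribution
  phi_{ab}, acting on all smooth functions.\<close>
definition phi2 :: "complex \<Rightarrow> complex \<Rightarrow> (real \<Rightarrow> complex) \<Rightarrow> complex" where
  "phi2 a b \<psi> = (THE v. \<exists>G :: complex \<Rightarrow> complex \<Rightarrow> complex.
      (\<forall>b'. (\<lambda>a'. G a' b') holomorphic_on UNIV) \<and>
      (\<forall>a'. G a' holomorphic_on UNIV) \<and>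
      (\<forall>a' b'. Re a' > -1 \<and> Re b' > -1 \<longrightarrow> G a' b' = phi2_int a' b' \<psi>) \<and>
      v = G a b)"

text \<open>Pseudoconvolution of compactly supported distributions:
  <A \<odot> B, psi> = <A(y1) \<otimes> B(y2), psi(y1 y2)> = <A(y1), <B(y2), psi(y1 y2)>>.\<close>
definition pconv :: "((real \<Rightarrow> complex) \<Rightarrow> complex) \<Rightarrow> ((real \<Rightarrow> complex) \<Rightarrow> complex)
    \<Rightarrow> (real \<Rightarrow> complex) \<Rightarrow> complex" where
  "pconv A B \<psi> = A (\<lambda>y1. B (\<lambda>y2. \<psi> (y1 * y2)))"

end

theory Submission
  imports Defs "HOL-Complex_Analysis.Complex_Analysis" "HOL-Computational_Algebra.Polynomial"
begin

text \<open>
  For \<open>Re a, Re b > -1\<close>, \<open>phi2 a b\<close> is integration against the Beta kernel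
  \<open>u\<^sup>a (1 - u)\<^sup>b / (Gamma (a + 1) Gamma (b + 1))\<close> on \<open>(0, 1)\<close>. Splitting the kernel with
  \<open>u + (1 - u) = 1\<close> and integrating by parts rewrites the pairing with \<open>f\<close> as a combination of
  pairings of \<open>f\<close> and \<open>f'\<close> with both parameters raised. Iterating \<open>n\<close> times gives a formula that
  is holomorphic in each parameter on \<open>Re a, Re b > 1 - n\<close>: for smooth \<open>f\<close> it is the analytic
  continuation, and it bounds the pairing by the first \<open>n\<close> derivatives of \<open>f\<close> on \<open>[0, 1]\<close>.
  Differentiating \<open>y \<mapsto> <phi2 c d, f (y * _)>\<close> under the pairing then shows that the
  pseudoconvolution is continuous for a \<open>C\<^sup>K\<close> norm on \<open>[0, 1]\<close>.

  On monomials \<open><phi2 a b, u\<^sup>i> = (a + 1)\<^sub>i / Gamma (a + b + i + 2)\<close>, so for the parameters of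
  the theorem the pseudoconvolution of \<open>u\<^sup>i\<close> is
  \<open>(t + 1)\<^sub>i / Gamma (t + i + 1) * (2)\<^sub>i / Gamma (i + 2) = 1 / Gamma (t + 1)\<close> for every \<open>i\<close>:
  the identity holds for polynomials. A smooth \<open>\<psi>\<close> is approximated on \<open>[0, 1]\<close>, together with
  its first \<open>K\<close> derivatives, by polynomials (Weierstrass for the \<open>K\<close>-th derivative, then
  integration), and continuity gives the general case.
\<close>

section \<open>The Beta kernel\<close>

definition beta_kernel :: "complex \<Rightarrow> complex \<Rightarrow> real \<Rightarrow> complex" where
  "beta_kernel a b u = (complex_of_real u powr a) * (complex_of_real (1 - u) powr b)
      * rGamma (a + 1) * rGamma (b + 1)"

lemma phi2_int_eq_integral_beta_kernel:
  "phi2_int a b f = integral {0<..<1} (\<lambda>u. beta_kernel a b u * f u)"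
  by (simp add: phi2_int_def beta_kernel_def)

lemma of_real_powr_add_one:
  "u > 0 \<Longrightarrow> complex_of_real u powr (a + 1) = of_real u * of_real u powr a"
  by (simp add: powr_def Ln_of_real distrib_right exp_add exp_of_real)

lemma beta_kernel_shift_left:
  assumes "0 < u"
  shows "(a + 1) * beta_kernel (a + 1) b u = of_real u * beta_kernel a b u"
  using rGamma_plus1[of "a + 1"] of_real_powr_add_one[OF assms, of a]
  by (simp add: beta_kernel_def mult_ac)

lemma beta_kernel_shift_right:
  assumes "u < 1"
  shows "(b + 1) * beta_kernel a (b + 1) u = of_real (1 - u) * beta_kernel a b u"
  using rGamma_plus1[of "b + 1"] of_real_powr_add_one[of "1 - u" b] assms
  by (simp add: beta_kernel_def mult_ac)

lemma beta_kernel_split: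
  assumes "0 < u" "u < 1"
  shows "beta_kernel a b u = (a + 1) * beta_kernel (a + 1) b u + (b + 1) * beta_kernel a (b + 1) u"
  using assms by (simp add: beta_kernel_shift_left beta_kernel_shift_right flip: distrib_right)

lemma has_vector_derivative_of_real_powr:
  assumes "u > 0"
  shows "((\<lambda>u. complex_of_real u powr c) has_vector_derivative (c * of_real u powr (c - 1))) (at u)"
proof -
  have "of_real u \<notin> \<real>\<^sub>\<le>\<^sub>0" using assms by (auto simp: complex_nonpos_Reals_iff)
  from has_field_derivative_powr[OF this, of c] show ?thesis
    by (rule has_vector_derivative_real_field)
qed

lemma has_vector_derivative_beta_kernel:
  assumes "0 < u" "u < 1"
  shows "(beta_kernel (a + 1) (b + 1) has_vector_derivative
           beta_kernel a (b + 1) u - beta_kernel (a + 1) b u) (at u)"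
proof -
  have "((\<lambda>u. complex_of_real (1 - u) powr (b + 1)) has_vector_derivative
          - ((b + 1) * of_real (1 - u) powr b)) (at u)"
    using vector_diff_chain_at[OF has_vector_derivative_diff[OF has_vector_derivative_const
          has_vector_derivative_id] has_vector_derivative_of_real_powr[of "1 - u" "b + 1"]] assms
    by (simp add: o_def)
  then have "(beta_kernel (a + 1) (b + 1) has_vector_derivative
      (of_real u powr (a + 1) * - ((b + 1) * of_real (1 - u) powr b)
       + (a + 1) * of_real u powr a * of_real (1 - u) powr (b + 1))
      * rGamma (a + 1 + 1) * rGamma (b + 1 + 1)) (at u)"
    unfolding beta_kernel_def
    using has_vector_derivative_of_real_powr[OF assms(1), of "a + 1"]
    by (intro has_vector_derivative_mult_left has_vector_derivative_mult) simp_all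
  also have "(of_real u powr (a + 1) * - ((b + 1) * of_real (1 - u) powr b)
       + (a + 1) * of_real u powr a * of_real (1 - u) powr (b + 1))
      * rGamma (a + 1 + 1) * rGamma (b + 1 + 1) = beta_kernel a (b + 1) u - beta_kernel (a + 1) b u"
    by (simp only: beta_kernel_def flip: rGamma_plus1[of "a + 1"] rGamma_plus1[of "b + 1"])
       (simp add: algebra_simps)
  finally show ?thesis .
qed

lemma norm_beta_kernel:
  "0 \<le> u \<Longrightarrow> u \<le> 1 \<Longrightarrow> norm (beta_kernel a b u)
     = u powr Re a * (1 - u) powr Re b * norm (rGamma (a + 1)) * norm (rGamma (b + 1))"
  by (simp add: beta_kernel_def norm_mult norm_powr_real_powr)

lemma continuous_on_beta_kernel: "Re a > 0 \<Longrightarrow> Re b > 0 \<Longrightarrow> continuous_on {0..1} (beta_kernel a b)"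
  unfolding beta_kernel_def by (intro continuous_intros) auto

lemma beta_kernel_integrable:
  assumes "Re a > -1" "Re b > -1" "continuous_on {0..1} f"
  shows "(\<lambda>u. beta_kernel a b u * f u) integrable_on {0<..<1}"
proof -
  obtain M where M: "\<And>u. u \<in> {0..1} \<Longrightarrow> norm (f u) \<le> M"
    using continuous_on_compact_bound[OF compact_Icc assms(3)] by blast
  define C where "C = norm (rGamma (a + 1)) * norm (rGamma (b + 1))"
  have "((\<lambda>u. u powr (Re a + 1 - 1) * (1 - u) powr (Re b + 1 - 1)) has_integral
          Beta (Re a + 1) (Re b + 1)) {0..1}"
    using assms by (intro has_integral_Beta_real) auto
  then have bound_integrable: "(\<lambda>u. (M * C) * (u powr Re a * (1 - u) powr Re b)) integrable_on {0<..<1}"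
    by (intro integrable_on_mult_right) (auto simp: integrable_on_Icc_iff_Ioo[symmetric])
  have "continuous_on {0<..<1} (\<lambda>u. beta_kernel a b u * f u)"
    unfolding beta_kernel_def
    by (intro continuous_intros continuous_on_subset[OF assms(3)]) auto
  then have "(\<lambda>u. beta_kernel a b u * f u) \<in> borel_measurable (lebesgue_on {0<..<1})"
    by (intro continuous_imp_measurable_on_sets_lebesgue) auto
  then have "(\<lambda>u. beta_kernel a b u * f u) absolutely_integrable_on {0<..<1}"
  proof (rule measurable_bounded_by_integrable_imp_absolutely_integrable[OF _ _ bound_integrable])
    fix u :: real assume u: "u \<in> {0<..<1}"
    have "norm (beta_kernel a b u * f u) = u powr Re a * (1 - u) powr Re b * C * norm (f u)"
      using u by (simp add: norm_mult norm_beta_kernel C_def)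
    also have "\<dots> \<le> u powr Re a * (1 - u) powr Re b * C * M"
      using u M by (intro mult_left_mono) (auto simp: C_def)
    finally show "norm (beta_kernel a b u * f u) \<le> (M * C) * (u powr Re a * (1 - u) powr Re b)"
      by (simp add: mult_ac)
  qed auto
  then show ?thesis by (simp add: absolutely_integrable_on_def)
qed

lemma phi2_int_split:
  assumes "Re a > -1" "Re b > -1" "continuous_on {0..1} f"
  shows "phi2_int a b f = (a + 1) * phi2_int (a + 1) b f + (b + 1) * phi2_int a (b + 1) f"
proof -
  have "phi2_int a b f = integral {0<..<1}
      (\<lambda>u. (a + 1) * (beta_kernel (a + 1) b u * f u) + (b + 1) * (beta_kernel a (b + 1) u * f u))"
    unfolding phi2_int_eq_integral_beta_kernel
    by (intro integral_cong) (simp add: beta_kernel_split[of _ a b] algebra_simps)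
  also have "\<dots> = (a + 1) * phi2_int (a + 1) b f + (b + 1) * phi2_int a (b + 1) f"
    unfolding phi2_int_eq_integral_beta_kernel
    using assms by (subst integral_add) (auto intro!: integrable_on_mult_right beta_kernel_integrable)
  finally show ?thesis .
qed

lemma phi2_int_by_parts:
  assumes "Re a > -1" "Re b > -1" "continuous_on {0..1} f" "continuous_on {0..1} f'"
    and f': "\<And>u. (f has_vector_derivative f' u) (at u)"
  shows "phi2_int (a + 1) b f = phi2_int a (b + 1) f + phi2_int (a + 1) (b + 1) f'"
proof -
  define H where "H u = beta_kernel (a + 1) (b + 1) u * f u" for u
  have "((\<lambda>u. beta_kernel a (b + 1) u * f u - beta_kernel (a + 1) b u * f u
            + beta_kernel (a + 1) (b + 1) u * f' u) has_integral (H 1 - H 0)) {0..1}"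
  proof (rule fundamental_theorem_of_calculus_interior)
    show "continuous_on {0..1} H"
      unfolding H_def using assms by (intro continuous_intros continuous_on_beta_kernel) auto
    fix u :: real assume "u \<in> {0<..<1}"
    then have "(H has_vector_derivative beta_kernel (a + 1) (b + 1) u * f' u
        + (beta_kernel a (b + 1) u - beta_kernel (a + 1) b u) * f u) (at u)"
      unfolding H_def by (intro has_vector_derivative_mult has_vector_derivative_beta_kernel f') auto
    then show "(H has_vector_derivative beta_kernel a (b + 1) u * f u - beta_kernel (a + 1) b u * f u
        + beta_kernel (a + 1) (b + 1) u * f' u) (at u)"
      by (simp add: algebra_simps)
  qed simp
  moreover have "H 1 = 0" "H 0 = 0" by (simp_all add: H_def beta_kernel_def)
  ultimately have "integral {0<..<1} (\<lambda>u. beta_kernel a (b + 1) u * f u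
      - beta_kernel (a + 1) b u * f u + beta_kernel (a + 1) (b + 1) u * f' u) = 0"
    by (simp add: has_integral_Icc_iff_Ioo integral_unique)
  moreover have "(\<lambda>u. beta_kernel a (b + 1) u * f u) integrable_on {0<..<1}"
    "(\<lambda>u. beta_kernel (a + 1) b u * f u) integrable_on {0<..<1}"
    "(\<lambda>u. beta_kernel (a + 1) (b + 1) u * f' u) integrable_on {0<..<1}"
    using assms by (auto intro!: beta_kernel_integrable)
  ultimately have "phi2_int a (b + 1) f - phi2_int (a + 1) b f + phi2_int (a + 1) (b + 1) f' = 0"
    unfolding phi2_int_eq_integral_beta_kernel
    by (simp add: integral_add integral_diff integrable_diff)
  then show ?thesis by (simp add: algebra_simps)
qed

text \<open>Every parameter on the right-hand side is raised by at least one; iterating this identity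
  continues \<open>phi2_int\<close> to the left.\<close>
lemma phi2_int_raise:
  assumes "Re a > -1" "Re b > -1" "continuous_on {0..1} f" "continuous_on {0..1} f'"
    and "\<And>u. (f has_vector_derivative f' u) (at u)"
  shows "phi2_int a b f = (a + b + 2) * (a + b + 3) * phi2_int (a + 1) (b + 1) f
     - (a + b + 2) * (b + 2) * phi2_int (a + 1) (b + 2) f' + (a + 1) * phi2_int (a + 1) (b + 1) f'"
proof -
  have "phi2_int a b f = (a + 1) * phi2_int (a + 1) b f + (b + 1) * phi2_int a (b + 1) f"
    and "phi2_int (a + 1) b f = phi2_int a (b + 1) f + phi2_int (a + 1) (b + 1) f'"
    and "phi2_int a (b + 1) f = (a + 1) * phi2_int (a + 1) (b + 1) f + (b + 2) * phi2_int a (b + 2) f"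
    and "phi2_int (a + 1) (b + 1) f = phi2_int a (b + 2) f + phi2_int (a + 1) (b + 2) f'"
    using phi2_int_split[of a b f] phi2_int_split[of a "b + 1" f]
      phi2_int_by_parts[of a b f f'] phi2_int_by_parts[of a "b + 1" f f'] assms
    by (simp_all add: add.assoc)
  then show ?thesis by algebra
qed

section \<open>Analytic continuation in the parameters\<close>

definition deriv_seq :: "(nat \<Rightarrow> real \<Rightarrow> complex) \<Rightarrow> bool" where
  "deriv_seq D \<longleftrightarrow> (\<forall>n x. (D n has_vector_derivative D (Suc n) x) (at x))"

lemma deriv_seqD: "deriv_seq D \<Longrightarrow> (D n has_vector_derivative D (Suc n) x) (at x)"
  unfolding deriv_seq_def by blast

lemma continuous_on_deriv_seq: "deriv_seq D \<Longrightarrow> continuous_on S (D n)"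
  by (rule continuous_on_vector_derivative, rule has_vector_derivative_at_within, erule deriv_seqD)

lemma deriv_seq_shift: "deriv_seq D \<Longrightarrow> deriv_seq (\<lambda>k. D (m + k))"
  unfolding deriv_seq_def by simp

lemma deriv_seq_Suc: "deriv_seq D \<Longrightarrow> deriv_seq (\<lambda>k. D (Suc k))"
  using deriv_seq_shift[of D 1] by simp

lemma smooth_fun_iff_deriv_seq: "smooth_fun f \<longleftrightarrow> (\<exists>D. D 0 = f \<and> deriv_seq D)"
  unfolding smooth_fun_def deriv_seq_def by blast

fun phi2_iter :: "nat \<Rightarrow> complex \<Rightarrow> complex \<Rightarrow> (nat \<Rightarrow> real \<Rightarrow> complex) \<Rightarrow> complex" where
  "phi2_iter 0 a b D = phi2_int a b (D 0)"
| "phi2_iter (Suc n) a b D = (a + b + 2) * (a + b + 3) * phi2_iter n (a + 1) (b + 1) D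
     - (a + b + 2) * (b + 2) * phi2_iter n (a + 1) (b + 2) (\<lambda>k. D (Suc k))
     + (a + 1) * phi2_iter n (a + 1) (b + 1) (\<lambda>k. D (Suc k))"

lemma phi2_iter_eq_phi2_int:
  "deriv_seq D \<Longrightarrow> Re a > -1 \<Longrightarrow> Re b > -1 \<Longrightarrow> phi2_iter n a b D = phi2_int a b (D 0)"
proof (induction n arbitrary: a b D)
  case (Suc n)
  have "deriv_seq (\<lambda>k. D (Suc k))" by (rule deriv_seq_Suc[OF Suc.prems(1)])
  with Suc have "phi2_iter (Suc n) a b D = (a + b + 2) * (a + b + 3) * phi2_int (a + 1) (b + 1) (D 0)
     - (a + b + 2) * (b + 2) * phi2_int (a + 1) (b + 2) (D 1) + (a + 1) * phi2_int (a + 1) (b + 1) (D 1)"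
    by simp
  also have "\<dots> = phi2_int a b (D 0)"
    using Suc.prems deriv_seqD[of D 0]
    by (intro phi2_int_raise[symmetric] continuous_on_deriv_seq) auto
  finally show ?case .
qed simp

lemma continuous_on_x_ln_x: "continuous_on {0..1} (\<lambda>s::real. s * ln s)"
  unfolding continuous_on_eq_continuous_within
proof
  fix x :: real assume x: "x \<in> {0..1}"
  show "continuous (at x within {0..1}) (\<lambda>s. s * ln s)"
  proof (cases "x = 0")
    case True
    have "((\<lambda>s. - (ln (inverse s) / inverse s)) \<longlongrightarrow> - 0) (at_right (0::real))"
      by (intro tendsto_minus filterlim_compose[OF ln_x_over_x_tendsto_0 filterlim_inverse_at_top_right])
    moreover have "\<forall>\<^sub>F s in at_right 0. - (ln (inverse s) / inverse s) = s * ln (s::real)"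
      by (rule eventually_at_rightI[of 0 1]) (auto simp: ln_inverse divide_inverse)
    ultimately have "((\<lambda>s::real. s * ln s) \<longlongrightarrow> 0) (at_right 0)"
      using Lim_transform_eventually by fastforce
    then show ?thesis using True by (simp add: continuous_within at_within_Icc_at_right)
  next
    case False
    show ?thesis
      by (rule continuous_at_imp_continuous_at_within) (use x False in \<open>auto intro!: continuous_intros\<close>)
  qed
qed

text \<open>\<open>Re a > 1\<close> keeps the \<open>a\<close>-derivative \<open>\<sigma>\<^sup>a\<^sup>-\<^sup>1 \<sigma> ln \<sigma>\<close> continuous up to \<open>\<sigma> = 0\<close>.\<close>
lemma holomorphic_on_integral_powr:
  fixes \<sigma> :: "real \<Rightarrow> real" and g :: "real \<Rightarrow> complex"
  assumes \<sigma>: "continuous_on {0..1} \<sigma>" "\<And>u. u \<in> {0..1} \<Longrightarrow> \<sigma> u \<in> {0..1}"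
    and g: "continuous_on {0..1} g"
  shows "(\<lambda>a. integral {0..1} (\<lambda>u. of_real (\<sigma> u) powr a * g u)) holomorphic_on {a. Re a > 1}"
proof -
  define H where "H = {a::complex. Re a > 1}"
  define fx where "fx x t = of_real (\<sigma> t) powr (x - 1) * of_real (\<sigma> t * ln (\<sigma> t)) * g t" for x t
  have "(\<lambda>a. integral (cbox 0 1) (\<lambda>u. of_real (\<sigma> u) powr a * g u)) holomorphic_on H"
  proof (rule leibniz_rule_holomorphic[where fx = fx])
    fix x :: complex and t :: real
    assume "x \<in> H" and t: "t \<in> cbox 0 1"
    show "((\<lambda>x. of_real (\<sigma> t) powr x * g t) has_field_derivative fx x t) (at x within H)"
    proof (cases "\<sigma> t = 0")
      case False
      with \<sigma>(2)[of t] t have s: "\<sigma> t > 0" by auto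
      have "((\<lambda>x. of_real (\<sigma> t) powr x * g t) has_field_derivative
          (Ln (of_real (\<sigma> t)) * of_real (\<sigma> t) powr x) * g t) (at x)"
        by (intro DERIV_cmult_right has_field_derivative_powr_right) (use s in auto)
      moreover have "(Ln (of_real (\<sigma> t)) * of_real (\<sigma> t) powr x) * g t = fx x t"
        using s of_real_powr_add_one[OF s, of "x - 1"] by (simp add: fx_def Ln_of_real)
      ultimately show ?thesis by (metis has_field_derivative_at_within)
    qed (simp add: fx_def)
  next
    fix x :: complex assume "x \<in> H"
    then show "(\<lambda>u. of_real (\<sigma> u) powr x * g u) integrable_on cbox 0 1"
      unfolding cbox_interval H_def using \<sigma>
      by (intro integrable_continuous_interval continuous_intros g
          continuous_on_compose2[OF continuous_on_of_real \<sigma>(1)]) auto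
  next
    have powr: "continuous_on (H \<times> {0..1}) (\<lambda>p. of_real (\<sigma> (snd p)) powr (fst p - 1))"
      using \<sigma> by (intro continuous_on_powr_complex continuous_intros
          continuous_on_compose2[OF \<sigma>(1)]) (auto simp: H_def)
    have "continuous_on {0..1} (\<lambda>t. \<sigma> t * ln (\<sigma> t))"
      using \<sigma> by (intro continuous_on_compose2[OF continuous_on_x_ln_x]) auto
    then have x_ln_x: "continuous_on (H \<times> {0..1}) (\<lambda>p. \<sigma> (snd p) * ln (\<sigma> (snd p)))"
      by (rule continuous_on_compose2[OF _ continuous_on_snd]) auto
    have "continuous_on (H \<times> {0..1}) (\<lambda>p. g (snd p))"
      by (intro continuous_on_compose2[OF g continuous_on_snd]) auto
    then show "continuous_on (H \<times> cbox 0 1) (\<lambda>(x, t). fx x t)"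
      unfolding cbox_interval fx_def case_prod_beta'
      by (intro continuous_on_mult[OF continuous_on_mult[OF powr continuous_on_of_real[OF x_ln_x]]])
  qed (auto simp: H_def convex_halfspace_Re_gt)
  then show ?thesis by (simp add: H_def cbox_interval)
qed

lemma phi2_int_eq_integral_powr_left:
  "phi2_int a b f = rGamma (a + 1)
     * integral {0..1} (\<lambda>u. of_real u powr a * (of_real (1 - u) powr b * rGamma (b + 1) * f u))"
  unfolding phi2_int_def integral_open_interval_real integral_mult_right[symmetric]
  by (simp add: mult_ac)

lemma phi2_int_eq_integral_powr_right:
  "phi2_int a b f = rGamma (b + 1)
     * integral {0..1} (\<lambda>u. of_real (1 - u) powr b * (of_real u powr a * rGamma (a + 1) * f u))"
  unfolding phi2_int_def integral_open_interval_real integral_mult_right[symmetric]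
  by (simp add: mult_ac)

lemma holomorphic_on_phi2_int_a:
  assumes "continuous_on {0..1} f" "Re b > 1"
  shows "(\<lambda>a. phi2_int a b f) holomorphic_on {a. Re a > 1}"
  unfolding phi2_int_eq_integral_powr_left using assms
  by (intro holomorphic_intros holomorphic_on_integral_powr[where \<sigma> = id, simplified])
     (auto intro!: continuous_intros)

lemma holomorphic_on_phi2_int_b:
  assumes "continuous_on {0..1} f" "Re a > 1"
  shows "(\<lambda>b. phi2_int a b f) holomorphic_on {b. Re b > 1}"
  unfolding phi2_int_eq_integral_powr_right using assms
  by (intro holomorphic_intros holomorphic_on_integral_powr) (auto intro!: continuous_intros)

lemma holomorphic_on_halfplane_shift:
  assumes "F holomorphic_on {a. Re a > c}" "Re k \<ge> 0"
  shows "(\<lambda>a. F (a + k)) holomorphic_on {a. Re a > c - Re k}"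
proof -
  have "(F \<circ> (\<lambda>a. a + k)) holomorphic_on {a. Re a > c - Re k}"
    by (rule holomorphic_on_compose_gen[OF _ assms(1)]) (auto intro!: holomorphic_intros)
  then show ?thesis by (simp add: o_def)
qed

lemma holomorphic_on_phi2_iter_a:
  "deriv_seq D \<Longrightarrow> Re b > 1 - real n \<Longrightarrow> (\<lambda>a. phi2_iter n a b D) holomorphic_on {a. Re a > 1 - real n}"
proof (induction n arbitrary: b D)
  case 0
  then show ?case using holomorphic_on_phi2_int_a[OF continuous_on_deriv_seq] by simp
next
  case (Suc n)
  have shifted: "(\<lambda>a. phi2_iter n (a + 1) b' E) holomorphic_on {a. Re a > 1 - real (Suc n)}"
    if "deriv_seq E" "Re b' > 1 - real n" for b' E
    using holomorphic_on_halfplane_shift[OF Suc.IH[OF that], of 1] by simp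
  show ?case unfolding phi2_iter.simps
    by (intro holomorphic_intros shifted) (use Suc.prems deriv_seq_Suc in auto)
qed

lemma holomorphic_on_phi2_iter_b:
  "deriv_seq D \<Longrightarrow> Re a > 1 - real n \<Longrightarrow> (\<lambda>b. phi2_iter n a b D) holomorphic_on {b. Re b > 1 - real n}"
proof (induction n arbitrary: a D)
  case 0
  then show ?case using holomorphic_on_phi2_int_b[OF continuous_on_deriv_seq] by simp
next
  case (Suc n)
  have shifted: "(\<lambda>b. phi2_iter n (a + 1) (b + k) E) holomorphic_on {b. Re b > 1 - real (Suc n)}"
    if "deriv_seq E" "k \<in> {1, 2}" for k E
  proof -
    have "(\<lambda>b. phi2_iter n (a + 1) b E) holomorphic_on {b. Re b > 1 - real n}"
      using Suc.IH[OF that(1)] Suc.prems by simp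
    moreover have "Re k \<ge> 0" using that(2) by auto
    ultimately show ?thesis
      using that(2) by (auto intro: holomorphic_on_subset[OF holomorphic_on_halfplane_shift])
  qed
  show ?case unfolding phi2_iter.simps
    by (intro holomorphic_intros shifted) (use Suc.prems deriv_seq_Suc in auto)
qed

lemma analytic_continuation_separately:
  fixes F G :: "complex \<Rightarrow> complex \<Rightarrow> complex"
  assumes S: "open S" "connected S" and S0: "open S0" "S0 \<noteq> {}" "S0 \<subseteq> S"
    and holo_a: "\<And>b. b \<in> S \<Longrightarrow> (\<lambda>a. F a b) holomorphic_on S" "\<And>b. b \<in> S \<Longrightarrow> (\<lambda>a. G a b) holomorphic_on S"
    and holo_b: "\<And>a. a \<in> S \<Longrightarrow> F a holomorphic_on S" "\<And>a. a \<in> S \<Longrightarrow> G a holomorphic_on S"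
    and eq: "\<And>a b. a \<in> S0 \<Longrightarrow> b \<in> S0 \<Longrightarrow> F a b = G a b"
    and ab: "a \<in> S" "b \<in> S"
  shows "F a b = G a b"
proof -
  have eq_S_S0: "F a' b' = G a' b'" if "a' \<in> S" "b' \<in> S0" for a' b'
  proof (rule analytic_continuation_open[where f = "\<lambda>a. F a b'" and g = "\<lambda>a. G a b'",
        OF S0(1) S(1) S0(2) S(2) S0(3)])
    have "b' \<in> S" using that(2) S0(3) by blast
    then show "(\<lambda>a. F a b') holomorphic_on S" "(\<lambda>a. G a b') holomorphic_on S"
      by (simp_all add: holo_a)
  qed (use that eq in simp_all)
  show ?thesis
    by (rule analytic_continuation_open[where f = "F a" and g = "G a", OF S0(1) S(1) S0(2) S(2) S0(3)])
       (simp_all add: ab holo_b eq_S_S0)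
qed

lemma halfplane_Re_gt_nonempty: "{a::complex. Re a > c} \<noteq> {}"
proof -
  have "of_real (c + 1) \<in> {a::complex. Re a > c}" by simp
  then show ?thesis by blast
qed

lemma separately_entire_eqI:
  fixes F G :: "complex \<Rightarrow> complex \<Rightarrow> complex"
  assumes "\<And>b. (\<lambda>a. F a b) holomorphic_on UNIV" "\<And>b. (\<lambda>a. G a b) holomorphic_on UNIV"
    and "\<And>a. F a holomorphic_on UNIV" "\<And>a. G a holomorphic_on UNIV"
    and "\<And>a b. Re a > c \<Longrightarrow> Re b > c \<Longrightarrow> F a b = G a b"
  shows "F a b = G a b"
  by (rule analytic_continuation_separately[where F = F and G = G,
        OF open_UNIV connected_UNIV open_halfspace_Re_gt[of c] halfplane_Re_gt_nonempty[of c]])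
     (simp_all add: assms)

lemma separately_entire_eqI_real:
  fixes F G :: "complex \<Rightarrow> complex \<Rightarrow> complex"
  assumes holo_a: "\<And>b. (\<lambda>a. F a b) holomorphic_on UNIV" "\<And>b. (\<lambda>a. G a b) holomorphic_on UNIV"
    and holo_b: "\<And>a. F a holomorphic_on UNIV" "\<And>a. G a holomorphic_on UNIV"
    and eq: "\<And>x y. x > c \<Longrightarrow> y > c \<Longrightarrow> F (of_real x) (of_real y) = G (of_real x) (of_real y)"
  shows "F a b = G a b"
proof -
  define U where "U = complex_of_real ` {c + 1<..c + 2}"
  have "\<forall>\<^sub>F y in at (c + 1). complex_of_real y \<noteq> complex_of_real (c + 1)"
    by (simp add: eventually_at_filter del: of_real_add)
  then have limpt: "of_real (c + 1) islimpt U"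
    unfolding U_def by (intro islimpt_isCont_image) simp_all
  have on_reals: "F a' (of_real y) - G a' (of_real y) = 0" if "y > c" for a' y
  proof (rule analytic_continuation[where f = "\<lambda>a. F a (of_real y) - G a (of_real y)",
        OF _ open_UNIV connected_UNIV subset_UNIV UNIV_I limpt _ UNIV_I])
    show "(\<lambda>a. F a (of_real y) - G a (of_real y)) holomorphic_on UNIV"
      using holo_a by (intro holomorphic_intros)
    show "F z (of_real y) - G z (of_real y) = 0" if "z \<in> U" for z
      using that eq \<open>y > c\<close> by (auto simp: U_def)
  qed
  have "F a b - G a b = 0"
  proof (rule analytic_continuation[where f = "\<lambda>b. F a b - G a b",
        OF _ open_UNIV connected_UNIV subset_UNIV UNIV_I limpt _ UNIV_I])
    show "(\<lambda>b. F a b - G a b) holomorphic_on UNIV"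
      using holo_b by (intro holomorphic_intros)
  qed (use on_reals in \<open>auto simp: U_def\<close>)
  then show ?thesis by simp
qed

text \<open>The depth is at least 2, so that the half-plane \<open>Re > 1 - n\<close> where \<open>phi2_iter n\<close> is
  holomorphic contains \<open>Re > -1\<close>, where \<open>phi2\<close> is given by \<open>phi2_int\<close>.\<close>
definition phi2_depth :: "complex \<Rightarrow> complex \<Rightarrow> nat" where
  "phi2_depth a b = nat \<lceil>max (- Re a) (- Re b)\<rceil> + 2"

lemma phi2_depth:
  "phi2_depth a b \<ge> 2" "Re a > 1 - real (phi2_depth a b)" "Re b > 1 - real (phi2_depth a b)"
  unfolding phi2_depth_def by linarith+

lemma phi2_iter_consistent:
  assumes D: "deriv_seq D" and n: "2 \<le> n" "n \<le> m" and ab: "Re a > 1 - real n" "Re b > 1 - real n"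
  shows "phi2_iter m a b D = phi2_iter n a b D"
proof (rule analytic_continuation_separately[where F = "\<lambda>a b. phi2_iter m a b D"
      and G = "\<lambda>a b. phi2_iter n a b D" and S = "{a. Re a > 1 - real n}" and S0 = "{a. Re a > -1}",
      OF open_halfspace_Re_gt convex_connected[OF convex_halfspace_Re_gt] open_halfspace_Re_gt
      halfplane_Re_gt_nonempty])
  have sub: "{a. Re a > 1 - real n} \<subseteq> {a. Re a > 1 - real m}" using n by auto
  show "(\<lambda>a. phi2_iter m a b' D) holomorphic_on {a. Re a > 1 - real n}"
    and "(\<lambda>a. phi2_iter n a b' D) holomorphic_on {a. Re a > 1 - real n}"
    if "b' \<in> {a. Re a > 1 - real n}" for b'
    using holomorphic_on_subset[OF holomorphic_on_phi2_iter_a[OF D, of m b'] sub]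
      holomorphic_on_phi2_iter_a[OF D, of n b'] n that by auto
  show "(\<lambda>b. phi2_iter m a' b D) holomorphic_on {a. Re a > 1 - real n}"
    and "(\<lambda>b. phi2_iter n a' b D) holomorphic_on {a. Re a > 1 - real n}"
    if "a' \<in> {a. Re a > 1 - real n}" for a'
    using holomorphic_on_subset[OF holomorphic_on_phi2_iter_b[OF D, of m a'] sub]
      holomorphic_on_phi2_iter_b[OF D, of n a'] n that by auto
next
  fix a' b' assume "a' \<in> {a. Re a > -1}" "b' \<in> {a. Re a > -1}"
  then show "phi2_iter m a' b' D = phi2_iter n a' b' D"
    using D by (simp add: phi2_iter_eq_phi2_int)
next
  show "{a. Re a > -1} \<subseteq> {a. Re a > 1 - real n}" using n by auto
qed (use ab in simp_all)

definition phi2_smooth :: "(nat \<Rightarrow> real \<Rightarrow> complex) \<Rightarrow> complex \<Rightarrow> complex \<Rightarrow> complex" where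
  "phi2_smooth D a b = phi2_iter (phi2_depth a b) a b D"

lemma phi2_smooth_eq_phi2_iter:
  assumes "deriv_seq D" "2 \<le> n" "Re a > 1 - real n" "Re b > 1 - real n"
  shows "phi2_smooth D a b = phi2_iter n a b D"
  unfolding phi2_smooth_def
proof (cases "phi2_depth a b \<le> n")
  case True
  show "phi2_iter (phi2_depth a b) a b D = phi2_iter n a b D"
    by (rule sym[OF phi2_iter_consistent[OF assms(1) phi2_depth(1) True phi2_depth(2,3)]])
next
  case False
  then show "phi2_iter (phi2_depth a b) a b D = phi2_iter n a b D"
    by (intro phi2_iter_consistent[OF assms(1,2) _ assms(3,4)]) simp
qed

lemma phi2_smooth_eq_phi2_int:
  "deriv_seq D \<Longrightarrow> Re a > -1 \<Longrightarrow> Re b > -1 \<Longrightarrow> phi2_smooth D a b = phi2_int a b (D 0)"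
  unfolding phi2_smooth_def by (rule phi2_iter_eq_phi2_int)

lemma holomorphic_on_phi2_smooth_a:
  assumes D: "deriv_seq D"
  shows "(\<lambda>a. phi2_smooth D a b) holomorphic_on UNIV"
proof -
  define N where "N = {n. 2 \<le> n \<and> Re b > 1 - real n}"
  have "(\<lambda>a. phi2_smooth D a b) holomorphic_on (\<Union>n\<in>N. {a. Re a > 1 - real n})"
  proof (rule holomorphic_on_UN_open)
    fix n assume n: "n \<in> N"
    then have "(\<lambda>a. phi2_iter n a b D) holomorphic_on {a. Re a > 1 - real n}"
      by (intro holomorphic_on_phi2_iter_a[OF D]) (simp add: N_def)
    then show "(\<lambda>a. phi2_smooth D a b) holomorphic_on {a. Re a > 1 - real n}"
      by (rule holomorphic_transform) (use n in \<open>simp add: N_def phi2_smooth_eq_phi2_iter[OF D, of n]\<close>)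
  qed (rule open_halfspace_Re_gt)
  moreover have "a \<in> (\<Union>n\<in>N. {a. Re a > 1 - real n})" for a
    using phi2_depth[of a b] by (auto simp: N_def)
  ultimately show ?thesis by (blast intro: holomorphic_on_subset)
qed

lemma holomorphic_on_phi2_smooth_b:
  assumes D: "deriv_seq D"
  shows "phi2_smooth D a holomorphic_on UNIV"
proof -
  define N where "N = {n. 2 \<le> n \<and> Re a > 1 - real n}"
  have "phi2_smooth D a holomorphic_on (\<Union>n\<in>N. {b. Re b > 1 - real n})"
  proof (rule holomorphic_on_UN_open)
    fix n assume n: "n \<in> N"
    then have "(\<lambda>b. phi2_iter n a b D) holomorphic_on {b. Re b > 1 - real n}"
      by (intro holomorphic_on_phi2_iter_b[OF D]) (simp add: N_def)
    then show "phi2_smooth D a holomorphic_on {b. Re b > 1 - real n}"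
      by (rule holomorphic_transform) (use n in \<open>simp add: N_def phi2_smooth_eq_phi2_iter[OF D, of n]\<close>)
  qed (rule open_halfspace_Re_gt)
  moreover have "b \<in> (\<Union>n\<in>N. {b. Re b > 1 - real n})" for b
    using phi2_depth[of a b] by (auto simp: N_def)
  ultimately show ?thesis by (blast intro: holomorphic_on_subset)
qed

lemma phi2_eq_phi2_smooth:
  assumes D: "deriv_seq D"
  shows "phi2 a b (D 0) = phi2_smooth D a b"
  unfolding phi2_def
proof (rule the_equality)
  show "\<exists>G. (\<forall>b'. (\<lambda>a'. G a' b') holomorphic_on UNIV) \<and> (\<forall>a'. G a' holomorphic_on UNIV) \<and>
      (\<forall>a' b'. Re a' > -1 \<and> Re b' > -1 \<longrightarrow> G a' b' = phi2_int a' b' (D 0)) \<and>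
      phi2_smooth D a b = G a b"
    using holomorphic_on_phi2_smooth_a[OF D] holomorphic_on_phi2_smooth_b[OF D]
      phi2_smooth_eq_phi2_int[OF D] by blast
next
  fix v assume "\<exists>G. (\<forall>b'. (\<lambda>a'. G a' b') holomorphic_on UNIV) \<and> (\<forall>a'. G a' holomorphic_on UNIV) \<and>
      (\<forall>a' b'. Re a' > -1 \<and> Re b' > -1 \<longrightarrow> G a' b' = phi2_int a' b' (D 0)) \<and> v = G a b"
  then obtain G where G: "\<And>b'. (\<lambda>a'. G a' b') holomorphic_on UNIV" "\<And>a'. G a' holomorphic_on UNIV"
    "\<And>a' b'. Re a' > -1 \<Longrightarrow> Re b' > -1 \<Longrightarrow> G a' b' = phi2_int a' b' (D 0)" "v = G a b"
    by blast
  have "G a b = phi2_smooth D a b"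
    by (rule separately_entire_eqI[where c = "-1"])
       (simp_all add: G holomorphic_on_phi2_smooth_a[OF D] holomorphic_on_phi2_smooth_b[OF D]
         phi2_smooth_eq_phi2_int[OF D])
  with G(4) show "v = phi2_smooth D a b" by simp
qed

lemma phi2_eq_phi2_iter:
  "deriv_seq D \<Longrightarrow> 2 \<le> n \<Longrightarrow> Re a > 1 - real n \<Longrightarrow> Re b > 1 - real n \<Longrightarrow>
   phi2 a b (D 0) = phi2_iter n a b D"
  by (simp add: phi2_eq_phi2_smooth phi2_smooth_eq_phi2_iter)

lemma phi2_eq_phi2_int:
  "deriv_seq D \<Longrightarrow> Re a > -1 \<Longrightarrow> Re b > -1 \<Longrightarrow> phi2 a b (D 0) = phi2_int a b (D 0)"
  by (simp add: phi2_eq_phi2_smooth phi2_smooth_eq_phi2_int)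

lemma holomorphic_on_phi2_a: "deriv_seq D \<Longrightarrow> (\<lambda>a. phi2 a b (D 0)) holomorphic_on UNIV"
  by (simp add: phi2_eq_phi2_smooth holomorphic_on_phi2_smooth_a)

lemma holomorphic_on_phi2_b: "deriv_seq D \<Longrightarrow> (\<lambda>b. phi2 a b (D 0)) holomorphic_on UNIV"
  by (simp add: phi2_eq_phi2_smooth holomorphic_on_phi2_smooth_b)

section \<open>Linearity and values on monomials\<close>

lemma deriv_seq_sum:
  "finite I \<Longrightarrow> (\<And>i. i \<in> I \<Longrightarrow> deriv_seq (Ds i)) \<Longrightarrow> deriv_seq (\<lambda>k u. \<Sum>i\<in>I. c i * Ds i k u)"
  unfolding deriv_seq_def by (auto intro!: has_vector_derivative_sum has_vector_derivative_mult_right)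

lemma deriv_seq_diff: "deriv_seq D \<Longrightarrow> deriv_seq E \<Longrightarrow> deriv_seq (\<lambda>k u. D k u - E k u)"
  unfolding deriv_seq_def by (auto intro!: has_vector_derivative_diff)

definition poly_derivs :: "complex poly \<Rightarrow> nat \<Rightarrow> real \<Rightarrow> complex" where
  "poly_derivs p k x = poly ((pderiv ^^ k) p) (of_real x)"

lemma poly_derivs_0: "poly_derivs p 0 = (\<lambda>x. poly p (of_real x))"
  by (simp add: fun_eq_iff poly_derivs_def)

lemma deriv_seq_poly_derivs: "deriv_seq (poly_derivs p)"
  unfolding deriv_seq_def poly_derivs_def
proof (intro allI)
  fix k x
  have "(complex_of_real has_vector_derivative 1) (at x)"
    using has_vector_derivative_of_real[OF DERIV_ident] by simp
  from field_vector_diff_chain_at[OF this poly_DERIV]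
  show "((\<lambda>x. poly ((pderiv ^^ k) p) (of_real x)) has_vector_derivative
          poly ((pderiv ^^ Suc k) p) (of_real x)) (at x)"
    by (simp add: o_def)
qed

text \<open>Leibniz rule for the derivatives of \<open>u * f u\<close>.\<close>
definition times_x_derivs :: "(nat \<Rightarrow> real \<Rightarrow> complex) \<Rightarrow> nat \<Rightarrow> real \<Rightarrow> complex" where
  "times_x_derivs D k u = of_real u * D k u + of_nat k * D (k - 1) u"

lemma times_x_derivs_0: "times_x_derivs D 0 = (\<lambda>u. of_real u * D 0 u)"
  by (simp add: fun_eq_iff times_x_derivs_def)

lemma deriv_seq_times_x_derivs:
  assumes D: "deriv_seq D"
  shows "deriv_seq (times_x_derivs D)"
  unfolding deriv_seq_def
proof (intro allI)
  fix n x
  have "((\<lambda>u. of_real u * D n u + of_nat n * D (n - 1) u) has_vector_derivative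
        (of_real x * D (Suc n) x + 1 * D n x + of_nat n * D (Suc (n - 1)) x)) (at x)"
    using deriv_seqD[OF D]
    by (intro has_vector_derivative_add has_vector_derivative_mult has_vector_derivative_mult_right)
       (auto intro!: derivative_eq_intros)
  moreover have "of_real x * D (Suc n) x + 1 * D n x + of_nat n * D (Suc (n - 1)) x
      = times_x_derivs D (Suc n) x"
    by (cases n) (simp_all add: times_x_derivs_def algebra_simps)
  moreover have "times_x_derivs D n = (\<lambda>u. of_real u * D n u + of_nat n * D (n - 1) u)"
    by (simp add: fun_eq_iff times_x_derivs_def)
  ultimately show "(times_x_derivs D n has_vector_derivative times_x_derivs D (Suc n) x) (at x)"
    by (simp only:)
qed

lemma phi2_sum:
  assumes I: "finite I" and Ds: "\<And>i. i \<in> I \<Longrightarrow> deriv_seq (Ds i)"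
  shows "phi2 a b (\<lambda>u. \<Sum>i\<in>I. c i * Ds i 0 u) = (\<Sum>i\<in>I. c i * phi2 a b (Ds i 0))"
proof -
  define E where "E = (\<lambda>k u. \<Sum>i\<in>I. c i * Ds i k u)"
  have E: "deriv_seq E" unfolding E_def by (rule deriv_seq_sum[OF I Ds])
  have "phi2 a b (E 0) = (\<Sum>i\<in>I. c i * phi2 a b (Ds i 0))"
  proof (rule separately_entire_eqI[where F = "\<lambda>a b. phi2 a b (E 0)"
        and G = "\<lambda>a b. \<Sum>i\<in>I. c i * phi2 a b (Ds i 0)" and c = "-1"])
    fix a b :: complex assume ab: "Re a > -1" "Re b > -1"
    have "phi2 a b (E 0) = integral {0<..<1} (\<lambda>u. \<Sum>i\<in>I. c i * (beta_kernel a b u * Ds i 0 u))"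
      unfolding phi2_eq_phi2_int[OF E ab] phi2_int_eq_integral_beta_kernel
      by (simp add: E_def sum_distrib_left mult_ac)
    also have "\<dots> = (\<Sum>i\<in>I. c i * phi2 a b (Ds i 0))"
      using ab Ds
      by (subst integral_sum[OF I])
         (auto intro!: integrable_on_mult_right beta_kernel_integrable continuous_on_deriv_seq
           simp: phi2_eq_phi2_int phi2_int_eq_integral_beta_kernel)
    finally show "phi2 a b (E 0) = (\<Sum>i\<in>I. c i * phi2 a b (Ds i 0))" .
  qed (use E Ds holomorphic_on_phi2_a holomorphic_on_phi2_b in \<open>auto intro!: holomorphic_intros\<close>)
  then show ?thesis by (simp add: E_def)
qed

lemma phi2_add:
  assumes "deriv_seq D" "deriv_seq E"
  shows "phi2 a b (\<lambda>u. D 0 u + E 0 u) = phi2 a b (D 0) + phi2 a b (E 0)"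
  using phi2_sum[of "{True, False}" "\<lambda>i. if i then D else E" a b "\<lambda>_. 1"] assms by simp

lemma phi2_times_x:
  assumes D: "deriv_seq D"
  shows "phi2 a b (\<lambda>u. of_real u * D 0 u) = (a + 1) * phi2 (a + 1) b (D 0)"
proof -
  have M: "deriv_seq (times_x_derivs D)" by (rule deriv_seq_times_x_derivs[OF D])
  have "phi2 a b (times_x_derivs D 0) = (a + 1) * phi2 (a + 1) b (D 0)"
  proof (rule separately_entire_eqI[where F = "\<lambda>a b. phi2 a b (times_x_derivs D 0)"
        and G = "\<lambda>a b. (a + 1) * phi2 (a + 1) b (D 0)" and c = "-1"])
    fix a b :: complex assume ab: "Re a > -1" "Re b > -1"
    then have ab': "Re (a + 1) > -1" by simp
    have "phi2 a b (times_x_derivs D 0)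
        = integral {0<..<1} (\<lambda>u. (a + 1) * (beta_kernel (a + 1) b u * D 0 u))"
      unfolding phi2_eq_phi2_int[OF M ab] phi2_int_eq_integral_beta_kernel
      by (intro integral_cong) (simp add: beta_kernel_shift_left times_x_derivs_def)
    also have "\<dots> = (a + 1) * phi2 (a + 1) b (D 0)"
      by (simp add: phi2_eq_phi2_int[OF D ab' ab(2)] phi2_int_eq_integral_beta_kernel)
    finally show "phi2 a b (times_x_derivs D 0) = (a + 1) * phi2 (a + 1) b (D 0)" .
  next
    have "((\<lambda>a. phi2 a b (D 0)) \<circ> (\<lambda>a. a + 1)) holomorphic_on UNIV" for b
      by (rule holomorphic_on_compose_gen[OF _ holomorphic_on_phi2_a[OF D]])
         (auto intro: holomorphic_intros)
    then show "(\<lambda>a. (a + 1) * phi2 (a + 1) b (D 0)) holomorphic_on UNIV" for b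
      by (auto simp: o_def intro!: holomorphic_intros)
  qed (use M D holomorphic_on_phi2_a holomorphic_on_phi2_b in \<open>auto intro!: holomorphic_intros\<close>)
  then show ?thesis by (simp add: times_x_derivs_0)
qed

lemma phi2_int_const_one_of_real:
  fixes x y :: real
  assumes "x > -1" "y > -1"
  shows "phi2_int (of_real x) (of_real y) (\<lambda>u. 1) = rGamma (of_real x + of_real y + 2)"
proof -
  have "Gamma (x + 1) > 0" "Gamma (y + 1) > 0"
    using assms by simp_all
  then have Beta: "Beta (x + 1) (y + 1) * (rGamma (x + 1) * rGamma (y + 1)) = rGamma (x + y + 2)"
    by (simp add: Beta_altdef rGamma_inverse_Gamma add_ac field_simps)
  have "((\<lambda>u. u powr (x + 1 - 1) * (1 - u) powr (y + 1 - 1)) has_integral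
      Beta (x + 1) (y + 1)) {0..1}"
    using assms by (intro has_integral_Beta_real) auto
  then have "((\<lambda>u. u powr x * (1 - u) powr y * (rGamma (x + 1) * rGamma (y + 1))) has_integral
      rGamma (x + y + 2)) {0<..<1}"
    unfolding Beta[symmetric] by (intro has_integral_mult_left) (simp add: has_integral_Icc_iff_Ioo)
  then have "((\<lambda>u. complex_of_real (u powr x * (1 - u) powr y * (rGamma (x + 1) * rGamma (y + 1))))
      has_integral of_real (rGamma (x + y + 2))) {0<..<1}"
    by (rule has_integral_of_real)
  then have "((\<lambda>u. beta_kernel (of_real x) (of_real y) u * 1)
      has_integral of_real (rGamma (x + y + 2))) {0<..<1}"
  proof (rule has_integral_eq[rotated])
    fix u :: real assume "u \<in> {0<..<1}"
    then show "complex_of_real (u powr x * (1 - u) powr y * (rGamma (x + 1) * rGamma (y + 1)))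
        = beta_kernel (of_real x) (of_real y) u * 1"
      using rGamma_complex_of_real[of "x + 1"] rGamma_complex_of_real[of "y + 1"]
        powr_of_real[of u x] powr_of_real[of "1 - u" y]
      by (simp add: beta_kernel_def)
  qed
  then show ?thesis
    unfolding phi2_int_eq_integral_beta_kernel rGamma_complex_of_real[of "x + y + 2", symmetric]
    by (simp add: integral_unique)
qed

lemma phi2_const_one: "phi2 a b (\<lambda>u. 1) = rGamma (a + b + 2)"
proof -
  have D: "deriv_seq (poly_derivs 1)" and D0: "poly_derivs 1 0 = (\<lambda>u. 1)"
    by (simp_all add: deriv_seq_poly_derivs poly_derivs_def fun_eq_iff)
  have "phi2 a b (poly_derivs 1 0) = rGamma (a + b + 2)"
  proof (rule separately_entire_eqI_real[where F = "\<lambda>a b. phi2 a b (poly_derivs 1 0)"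
        and G = "\<lambda>a b. rGamma (a + b + 2)" and c = "-1"])
    fix x y :: real assume "x > -1" "y > -1"
    then show "phi2 (of_real x) (of_real y) (poly_derivs 1 0) = rGamma (of_real x + of_real y + 2)"
      using phi2_eq_phi2_int[OF D, of "of_real x" "of_real y"] phi2_int_const_one_of_real[of x y]
      by (simp add: D0)
  qed (use holomorphic_on_phi2_a[OF D] holomorphic_on_phi2_b[OF D] in \<open>auto intro!: holomorphic_intros\<close>)
  then show ?thesis by (simp add: D0)
qed

lemma phi2_power:
  "phi2 a b (\<lambda>u. of_real u ^ i) = pochhammer (a + 1) i * rGamma (a + b + of_nat i + 2)"
proof (induction i arbitrary: a)
  case 0
  then show ?case by (simp add: phi2_const_one)
next
  case (Suc i)
  have "poly_derivs (monom 1 i) 0 = (\<lambda>u. of_real u ^ i)"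
    by (simp add: poly_derivs_def poly_monom fun_eq_iff)
  then have "phi2 a b (\<lambda>u. of_real u ^ Suc i) = (a + 1) * phi2 (a + 1) b (\<lambda>u. of_real u ^ i)"
    using phi2_times_x[OF deriv_seq_poly_derivs, of a b "monom 1 i"] by simp
  also have "\<dots> = pochhammer (a + 1) (Suc i) * rGamma (a + b + of_nat (Suc i) + 2)"
    by (simp add: Suc.IH pochhammer_rec add_ac)
  finally show ?case .
qed

section \<open>Estimates and dilations\<close>

fun phi2_iter_bound :: "nat \<Rightarrow> complex \<Rightarrow> complex \<Rightarrow> real" where
  "phi2_iter_bound 0 a b = norm (rGamma (a + 1)) * norm (rGamma (b + 1))"
| "phi2_iter_bound (Suc n) a b = norm ((a + b + 2) * (a + b + 3)) * phi2_iter_bound n (a + 1) (b + 1)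
     + norm ((a + b + 2) * (b + 2)) * phi2_iter_bound n (a + 1) (b + 2)
     + norm (a + 1) * phi2_iter_bound n (a + 1) (b + 1)"

lemma phi2_iter_bound_nonneg: "phi2_iter_bound n a b \<ge> 0"
  by (induction n arbitrary: a b) auto

lemma norm_phi2_iter_le:
  assumes "Re a > 1 - real n" "Re b > 1 - real n" "\<And>j. continuous_on {0..1} (D j)"
    and "\<And>j u. j \<le> n \<Longrightarrow> u \<in> {0..1} \<Longrightarrow> norm (D j u) \<le> M"
  shows "norm (phi2_iter n a b D) \<le> phi2_iter_bound n a b * M"
  using assms
proof (induction n arbitrary: a b D)
  case 0
  then have ab: "Re a > 0" "Re b > 0" by auto
  have "norm (integral {0..1} (\<lambda>u. beta_kernel a b u * D 0 u)) \<le> (phi2_iter_bound 0 a b * M) * (1 - 0)"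
  proof (rule integral_bound)
    show "continuous_on {0..1} (\<lambda>u. beta_kernel a b u * D 0 u)"
      by (intro continuous_intros continuous_on_beta_kernel ab 0)
    fix u :: real assume u: "u \<in> {0..1}"
    have "norm (beta_kernel a b u) = (u powr Re a * (1 - u) powr Re b) * phi2_iter_bound 0 a b"
      using u by (simp add: norm_beta_kernel)
    also have "\<dots> \<le> 1 * phi2_iter_bound 0 a b"
      using u ab by (intro mult_right_mono mult_le_one powr_le1) auto
    finally have "norm (beta_kernel a b u) \<le> phi2_iter_bound 0 a b" by simp
    then show "norm (beta_kernel a b u * D 0 u) \<le> phi2_iter_bound 0 a b * M"
      unfolding norm_mult using u 0(4)[of 0 u] by (intro mult_mono) auto
  qed simp
  then show ?case
    by (simp add: phi2_int_eq_integral_beta_kernel integral_open_interval_real)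
next
  case (Suc n)
  define c1 where "c1 = (a + b + 2) * (a + b + 3)"
  define c2 where "c2 = (a + b + 2) * (b + 2)"
  define c3 where "c3 = a + 1"
  define X where "X = phi2_iter n (a + 1) (b + 1) D"
  define Y where "Y = phi2_iter n (a + 1) (b + 2) (\<lambda>k. D (Suc k))"
  define Z where "Z = phi2_iter n (a + 1) (b + 1) (\<lambda>k. D (Suc k))"
  have "norm X \<le> phi2_iter_bound n (a + 1) (b + 1) * M"
    "norm Y \<le> phi2_iter_bound n (a + 1) (b + 2) * M"
    "norm Z \<le> phi2_iter_bound n (a + 1) (b + 1) * M"
    unfolding X_def Y_def Z_def by (rule Suc.IH; use Suc.prems in auto)+
  then have "norm c1 * norm X + norm c2 * norm Y + norm c3 * norm Z \<le> phi2_iter_bound (Suc n) a b * M"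
    unfolding c1_def c2_def c3_def phi2_iter_bound.simps distrib_right
    by (intro add_mono) (auto intro!: mult_left_mono simp: mult.assoc)
  moreover have "norm (c1 * X - c2 * Y + c3 * Z) \<le> norm c1 * norm X + norm c2 * norm Y + norm c3 * norm Z"
    using norm_triangle_ineq[of "c1 * X - c2 * Y" "c3 * Z"] norm_triangle_ineq4[of "c1 * X" "c2 * Y"]
    by (simp add: norm_mult)
  ultimately show ?case
    by (simp add: c1_def c2_def c3_def X_def Y_def Z_def)
qed

lemma norm_phi2_le:
  assumes "deriv_seq D" "2 \<le> n" "Re a > 1 - real n" "Re b > 1 - real n"
    and "\<And>j u. j \<le> n \<Longrightarrow> u \<in> {0..1} \<Longrightarrow> norm (D j u) \<le> M"
  shows "norm (phi2 a b (D 0)) \<le> phi2_iter_bound n a b * M"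
  unfolding phi2_eq_phi2_iter[OF assms(1-4)]
  by (rule norm_phi2_iter_le) (use assms in \<open>auto simp: continuous_on_deriv_seq\<close>)

lemma has_vector_derivative_phi2_iter_param:
  fixes Z Z' :: "real \<Rightarrow> nat \<Rightarrow> real \<Rightarrow> complex"
  assumes "\<And>y j u. ((\<lambda>y. Z y j u) has_vector_derivative Z' y j u) (at y)"
    and "\<And>y j. continuous_on {0..1} (Z y j)"
    and "\<And>j. continuous_on (UNIV \<times> {0..1}) (\<lambda>(y, u). Z' y j u)"
    and "Re a > 1 - real n" "Re b > 1 - real n"
  shows "((\<lambda>y. phi2_iter n a b (Z y)) has_vector_derivative phi2_iter n a b (Z' y)) (at y)"
  using assms
proof (induction n arbitrary: a b Z Z')
  case 0
  then have cont: "continuous_on {0..1} (beta_kernel a b)"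
    by (intro continuous_on_beta_kernel) auto
  have "((\<lambda>y. integral (cbox 0 1) (\<lambda>u. beta_kernel a b u * Z y 0 u)) has_vector_derivative
        integral (cbox 0 1) (\<lambda>u. beta_kernel a b u * Z' y 0 u)) (at y within UNIV)"
  proof (rule leibniz_rule_vector_derivative)
    have "continuous_on (UNIV \<times> {0..1}) (\<lambda>p::real \<times> real. beta_kernel a b (snd p))"
      by (rule continuous_on_compose2[OF cont continuous_on_snd]) auto
    from continuous_on_mult[OF this 0(3)[of 0, unfolded case_prod_beta']]
    show "continuous_on (UNIV \<times> cbox 0 1) (\<lambda>(y, u). beta_kernel a b u * Z' y 0 u)"
      by (simp add: cbox_interval case_prod_beta')
  qed (use 0 cont in \<open>auto intro!: has_vector_derivative_mult_right integrable_continuous_interval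
        continuous_intros simp: cbox_interval\<close>)
  then show ?case
    by (simp add: phi2_int_eq_integral_beta_kernel integral_open_interval_real cbox_interval)
next
  case (Suc n)
  have "((\<lambda>y. phi2_iter n a' b' (\<lambda>k. Z y (m + k))) has_vector_derivative
      phi2_iter n a' b' (\<lambda>k. Z' y (m + k))) (at y)"
    if "Re a' > 1 - real n" "Re b' > 1 - real n" for a' b' m
    by (rule Suc.IH) (use Suc.prems that in auto)
  from this[of _ _ 0] this[of _ _ 1] Suc.prems show ?case
    unfolding phi2_iter.simps
    by (intro has_vector_derivative_add has_vector_derivative_diff has_vector_derivative_mult_right) auto
qed

definition dilate_derivs :: "(nat \<Rightarrow> real \<Rightarrow> complex) \<Rightarrow> real \<Rightarrow> nat \<Rightarrow> real \<Rightarrow> complex" where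
  "dilate_derivs D y j u = of_real y ^ j * D j (y * u)"

lemma dilate_derivs_0: "dilate_derivs D y 0 = (\<lambda>u. D 0 (y * u))"
  by (simp add: fun_eq_iff dilate_derivs_def)

lemma has_vector_derivative_comp_scale:
  assumes "deriv_seq D"
  shows "((\<lambda>u. D j (y * u)) has_vector_derivative (of_real y * D (Suc j) (y * u))) (at u)"
proof -
  have "((\<lambda>u. y * u) has_vector_derivative y) (at u)"
    using has_vector_derivative_mult_right[OF has_vector_derivative_id, of y] by simp
  from vector_diff_chain_at[OF this deriv_seqD[OF assms]] show ?thesis
    by (simp add: o_def scaleR_conv_of_real)
qed

lemma deriv_seq_dilate_derivs:
  assumes "deriv_seq D"
  shows "deriv_seq (dilate_derivs D y)"
  unfolding deriv_seq_def
proof (intro allI)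
  fix n x
  have "((\<lambda>u. of_real y ^ n * D n (y * u)) has_vector_derivative
      of_real y ^ n * (of_real y * D (Suc n) (y * x))) (at x)"
    by (intro has_vector_derivative_mult_right has_vector_derivative_comp_scale assms)
  then show "(dilate_derivs D y n has_vector_derivative dilate_derivs D y (Suc n) x) (at x)"
    unfolding dilate_derivs_def[abs_def] by (simp add: mult_ac)
qed

lemma has_vector_derivative_dilate_derivs_param:
  assumes "deriv_seq D"
  shows "((\<lambda>y. dilate_derivs D y j u) has_vector_derivative
           times_x_derivs (dilate_derivs (\<lambda>k. D (Suc k)) y) j u) (at y)"
proof -
  have "((\<lambda>y. D j (y * u)) has_vector_derivative of_real u * D (Suc j) (y * u)) (at y)"
    using has_vector_derivative_comp_scale[OF assms, of j u y] by (simp add: mult.commute)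
  moreover have "((\<lambda>y. complex_of_real y ^ j) has_vector_derivative
      of_nat j * of_real y ^ (j - 1)) (at y)"
    by (rule has_vector_derivative_real_field) (auto intro!: derivative_eq_intros)
  ultimately have "((\<lambda>y. of_real y ^ j * D j (y * u)) has_vector_derivative
      of_real y ^ j * (of_real u * D (Suc j) (y * u))
      + of_nat j * of_real y ^ (j - 1) * D j (y * u)) (at y)"
    by (rule has_vector_derivative_mult[rotated])
  then show ?thesis
    by (cases j) (simp_all add: dilate_derivs_def times_x_derivs_def algebra_simps)
qed

lemma continuous_on_dilate_derivs_param:
  assumes "deriv_seq D"
  shows "continuous_on (UNIV \<times> {0..1}) (\<lambda>(y, u). times_x_derivs (dilate_derivs D y) j u)"
proof -
  have "continuous_on (UNIV \<times> {0..1}) (\<lambda>p::real \<times> real. D k (fst p * snd p))" for k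
    by (rule continuous_on_compose2[OF continuous_on_deriv_seq[OF assms]])
       (auto intro!: continuous_intros)
  then show ?thesis
    unfolding times_x_derivs_def dilate_derivs_def case_prod_beta' by (intro continuous_intros)
qed

lemma has_vector_derivative_phi2_dilate:
  assumes D: "deriv_seq D"
  shows "((\<lambda>y. phi2 a b (\<lambda>u. D 0 (y * u))) has_vector_derivative
           (a + 1) * phi2 (a + 1) b (\<lambda>u. D 1 (y * u))) (at y)"
proof -
  define n where "n = phi2_depth a b"
  have n: "2 \<le> n" "Re a > 1 - real n" "Re b > 1 - real n"
    using phi2_depth[of a b] by (simp_all add: n_def)
  have D': "deriv_seq (dilate_derivs (\<lambda>k. D (Suc k)) y)" for y
    by (rule deriv_seq_dilate_derivs[OF deriv_seq_Suc[OF D]])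
  have "((\<lambda>y. phi2_iter n a b (dilate_derivs D y)) has_vector_derivative
      phi2_iter n a b (times_x_derivs (dilate_derivs (\<lambda>k. D (Suc k)) y))) (at y)"
    by (rule has_vector_derivative_phi2_iter_param[OF has_vector_derivative_dilate_derivs_param[OF D]
          continuous_on_deriv_seq[OF deriv_seq_dilate_derivs[OF D]]
          continuous_on_dilate_derivs_param[OF deriv_seq_Suc[OF D]] n(2,3)])
  moreover have "phi2_iter n a b (dilate_derivs D y) = phi2 a b (\<lambda>u. D 0 (y * u))" for y
    using phi2_eq_phi2_iter[OF deriv_seq_dilate_derivs[OF D] n] by (simp add: dilate_derivs_0)
  moreover have "phi2_iter n a b (times_x_derivs (dilate_derivs (\<lambda>k. D (Suc k)) y))
      = (a + 1) * phi2 (a + 1) b (\<lambda>u. D 1 (y * u))"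
    using phi2_eq_phi2_iter[OF deriv_seq_times_x_derivs[OF D'] n, symmetric]
      phi2_times_x[OF D', of a b]
    by (simp add: times_x_derivs_0 dilate_derivs_0)
  ultimately show ?thesis by simp
qed

section \<open>Approximation by polynomials in \<open>C\<^sup>K([0, 1])\<close>\<close>

lemma Weierstrass_complex_poly:
  fixes f :: "real \<Rightarrow> complex"
  assumes f: "continuous_on {0..1} f" and e: "e > 0"
  obtains q :: "complex poly" where "\<And>x. x \<in> {0..1} \<Longrightarrow> norm (f x - poly q (of_real x)) < e"
proof -
  obtain gr where gr: "real_polynomial_function gr"
    "\<And>x. x \<in> {0..1} \<Longrightarrow> \<bar>Re (f x) - gr x\<bar> < e / 2"
    using Stone_Weierstrass_real_polynomial_function[of "{0..1}" "\<lambda>x. Re (f x)" "e / 2"] f e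
    by (auto intro: continuous_intros)
  obtain gi where gi: "real_polynomial_function gi"
    "\<And>x. x \<in> {0..1} \<Longrightarrow> \<bar>Im (f x) - gi x\<bar> < e / 2"
    using Stone_Weierstrass_real_polynomial_function[of "{0..1}" "\<lambda>x. Im (f x)" "e / 2"] f e
    by (auto intro: continuous_intros)
  obtain ar nr ai ni where ar: "gr = (\<lambda>x. \<Sum>i\<le>nr. ar i * x ^ i)"
    and ai: "gi = (\<lambda>x. \<Sum>i\<le>ni. ai i * x ^ i)"
    using gr(1) gi(1) real_polynomial_function_iff_sum by metis
  define q where
    "q = (\<Sum>i\<le>nr. monom (complex_of_real (ar i)) i) + (\<Sum>i\<le>ni. monom (\<i> * of_real (ai i)) i)"
  have q: "poly q (of_real x) = complex_of_real (gr x) + \<i> * of_real (gi x)" for x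
    by (simp add: q_def ar ai poly_sum poly_monom sum_distrib_left mult.assoc)
  show ?thesis
  proof (rule that)
    fix x :: real assume x: "x \<in> {0..1}"
    have "norm (f x - poly q (of_real x)) \<le> \<bar>Re (f x) - gr x\<bar> + \<bar>Im (f x) - gi x\<bar>"
      using cmod_le[of "f x - poly q (of_real x)"] by (simp add: q)
    also have "\<dots> < e" using gr(2)[OF x] gi(2)[OF x] by linarith
    finally show "norm (f x - poly q (of_real x)) < e" .
  qed
qed

lemma exists_antiderivative_poly:
  fixes q :: "'a::field_char_0 poly"
  shows "\<exists>p. pderiv p = q \<and> poly p 0 = c"
proof (intro exI conjI)
  define p where "p = pCons c (Poly (map (\<lambda>n. coeff q n / of_nat (Suc n)) [0..<Suc (degree q)]))"
  show "pderiv p = q"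
  proof (rule poly_eqI)
    fix n
    have "of_nat (Suc n) \<noteq> (0::'a)" by (rule of_nat_neq_0)
    then show "coeff (pderiv p) n = coeff q n"
      by (cases "n \<le> degree q")
         (auto simp: p_def coeff_pderiv nth_default_def coeff_eq_0 simp del: upt_Suc)
  qed
  show "poly p 0 = c" by (simp add: p_def poly_0_coeff_0)
qed

lemma exists_poly_higher_pderiv:
  fixes q :: "'a::field_char_0 poly"
  shows "\<exists>p. (pderiv ^^ K) p = q \<and> (\<forall>i<K. poly ((pderiv ^^ i) p) 0 = v i)"
proof (induction K arbitrary: v)
  case (Suc K)
  obtain p1 where p1: "(pderiv ^^ K) p1 = q" "\<forall>i<K. poly ((pderiv ^^ i) p1) 0 = v (Suc i)"
    using Suc.IH[of "\<lambda>i. v (Suc i)"] by blast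
  obtain p where p: "pderiv p = p1" "poly p 0 = v 0"
    using exists_antiderivative_poly by blast
  have "(pderiv ^^ Suc i) p = (pderiv ^^ i) p1" for i
    by (simp add: funpow_Suc_right p(1) del: funpow.simps)
  then have "(pderiv ^^ Suc K) p = q \<and> (\<forall>i<Suc K. poly ((pderiv ^^ i) p) 0 = v i)"
    using p1 p(2) by (auto simp: less_Suc_eq_0_disj)
  then show ?case by blast
qed simp

lemma norm_le_if_vector_derivative_bounded:
  fixes f f' :: "real \<Rightarrow> 'a::real_inner"
  assumes f': "\<And>x. (f has_vector_derivative f' x) (at x)" and "f 0 = 0"
    and bound: "\<And>x. x \<in> {0..1} \<Longrightarrow> norm (f' x) \<le> e" and x: "x \<in> {0..1}"
  shows "norm (f x) \<le> e"
proof (cases "x = 0")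
  case True
  have "0 \<le> e" using order_trans[OF norm_ge_zero bound[of 0]] by simp
  with True \<open>f 0 = 0\<close> show ?thesis by simp
next
  case False
  with x have "0 < x" by simp
  have "continuous_on {0..x} f"
    using f' by (intro continuous_on_vector_derivative) (auto intro: has_vector_derivative_at_within)
  then obtain \<xi> where \<xi>: "\<xi> \<in> {0<..<x}" "norm (f x - f 0) \<le> norm ((x - 0) *\<^sub>R f' \<xi>)"
    using mvt_general[OF \<open>0 < x\<close>, of f "\<lambda>\<xi> h. h *\<^sub>R f' \<xi>"] f'
    by (auto simp: has_vector_derivative_def)
  have "norm ((x - 0) *\<^sub>R f' \<xi>) = x * norm (f' \<xi>)" using \<open>0 < x\<close> by simp
  also have "\<dots> \<le> 1 * e" by (intro mult_mono bound) (use x \<xi> in auto)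
  finally show ?thesis using \<xi>(2) \<open>f 0 = 0\<close> by simp
qed

lemma poly_approx_derivs:
  assumes D: "deriv_seq D" and e: "e > 0"
  obtains p where "\<And>i x. i \<le> K \<Longrightarrow> x \<in> {0..1} \<Longrightarrow> norm (D i x - poly_derivs p i x) \<le> e"
proof -
  obtain q where q: "\<And>x. x \<in> {0..1} \<Longrightarrow> norm (D K x - poly q (of_real x)) < e"
    using Weierstrass_complex_poly[OF continuous_on_deriv_seq[OF D] e] by blast
  obtain p where p: "(pderiv ^^ K) p = q" "\<forall>i<K. poly ((pderiv ^^ i) p) 0 = D i 0"
    using exists_poly_higher_pderiv[of K q "\<lambda>i. D i 0"] by blast
  define G where "G i x = D i x - poly_derivs p i x" for i x
  have G: "deriv_seq G"
    unfolding G_def[abs_def] by (rule deriv_seq_diff[OF D deriv_seq_poly_derivs])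
  have main: "\<forall>x\<in>{0..1}. norm (G (K - m) x) \<le> e" if "m \<le> K" for m
    using that
  proof (induction m)
    case 0
    show ?case using q p(1) by (auto simp: G_def poly_derivs_def less_imp_le)
  next
    case (Suc m)
    have "Suc (K - Suc m) = K - m" using Suc.prems by simp
    then have "\<And>x. x \<in> {0..1} \<Longrightarrow> norm (G (Suc (K - Suc m)) x) \<le> e"
      using Suc.IH Suc.prems by simp
    moreover have "G (K - Suc m) 0 = 0"
      using p(2) Suc.prems by (simp add: G_def poly_derivs_def)
    ultimately show ?case
      using norm_le_if_vector_derivative_bounded[where f = "G (K - Suc m)"
          and f' = "G (Suc (K - Suc m))", OF deriv_seqD[OF G]] by blast
  qed
  show ?thesis
  proof (rule that)
    fix i and x :: real assume "i \<le> K" "x \<in> {0..1}"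
    then show "norm (D i x - poly_derivs p i x) \<le> e" using main[of "K - i"] by (simp add: G_def)
  qed
qed

lemma eq_zero_if_norm_le_mult_epsilon:
  fixes z :: "'a::real_normed_vector"
  assumes "\<And>e. e > 0 \<Longrightarrow> norm z \<le> B * e"
  shows "z = 0"
proof -
  have "norm z \<le> 0 + d" if d: "d > 0" for d
  proof -
    have "norm z \<le> B * (d / (\<bar>B\<bar> + 1))"
      using d by (intro assms divide_pos_pos) auto
    also have "\<dots> \<le> (\<bar>B\<bar> + 1) * (d / (\<bar>B\<bar> + 1))"
      using d by (intro mult_right_mono divide_nonneg_pos) auto
    finally show ?thesis by simp
  qed
  then have "norm z \<le> 0" by (rule field_le_epsilon)
  then show ?thesis by simp
qed

section \<open>The pseudoconvolution\<close>

definition phi2_dilate_derivs ::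
    "complex \<Rightarrow> complex \<Rightarrow> (nat \<Rightarrow> real \<Rightarrow> complex) \<Rightarrow> nat \<Rightarrow> real \<Rightarrow> complex" where
  "phi2_dilate_derivs a b D k y = pochhammer (a + 1) k * phi2 (a + of_nat k) b (\<lambda>u. D k (y * u))"

lemma phi2_dilate_derivs_0: "phi2_dilate_derivs a b D 0 = (\<lambda>y. phi2 a b (\<lambda>u. D 0 (y * u)))"
  by (simp add: fun_eq_iff phi2_dilate_derivs_def)

lemma deriv_seq_phi2_dilate_derivs:
  assumes D: "deriv_seq D"
  shows "deriv_seq (phi2_dilate_derivs a b D)"
  unfolding deriv_seq_def
proof (intro allI)
  fix k y
  have "((\<lambda>y. phi2 (a + of_nat k) b (\<lambda>u. D k (y * u))) has_vector_derivative
       (a + of_nat k + 1) * phi2 (a + of_nat k + 1) b (\<lambda>u. D (Suc k) (y * u))) (at y)"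
    using has_vector_derivative_phi2_dilate[OF deriv_seq_shift[OF D, of k]] by simp
  from has_vector_derivative_mult_right[OF this, of "pochhammer (a + 1) k"]
  show "(phi2_dilate_derivs a b D k has_vector_derivative phi2_dilate_derivs a b D (Suc k) y) (at y)"
    unfolding phi2_dilate_derivs_def[abs_def] by (simp add: pochhammer_Suc algebra_simps)
qed

lemma norm_phi2_dilate_derivs_le:
  assumes D: "deriv_seq D" and m: "2 \<le> m" "Re (a + of_nat k) > 1 - real m" "Re b > 1 - real m"
    and y: "y \<in> {0..1}" and bound: "\<And>i x. i \<le> k + m \<Longrightarrow> x \<in> {0..1} \<Longrightarrow> norm (D i x) \<le> e"
  shows "norm (phi2_dilate_derivs a b D k y)
           \<le> norm (pochhammer (a + 1) k) * phi2_iter_bound m (a + of_nat k) b * e"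
proof -
  have Dk: "deriv_seq (\<lambda>j. D (k + j))" by (rule deriv_seq_shift[OF D])
  have "norm (phi2 (a + of_nat k) b (dilate_derivs (\<lambda>j. D (k + j)) y 0))
      \<le> phi2_iter_bound m (a + of_nat k) b * e"
  proof (rule norm_phi2_le[OF deriv_seq_dilate_derivs[OF Dk] m])
    fix j and u :: real assume j: "j \<le> m" and u: "u \<in> {0..1}"
    have "norm (dilate_derivs (\<lambda>j. D (k + j)) y j u) = \<bar>y\<bar> ^ j * norm (D (k + j) (y * u))"
      by (simp add: dilate_derivs_def norm_mult norm_power)
    also have "\<dots> \<le> 1 * e"
      using y u j by (intro mult_mono power_le_one bound) (auto intro: mult_le_one)
    finally show "norm (dilate_derivs (\<lambda>j. D (k + j)) y j u) \<le> e" by simp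
  qed
  then show ?thesis
    by (simp add: phi2_dilate_derivs_def dilate_derivs_0 norm_mult mult.assoc mult_left_mono)
qed

lemma pconv_phi2_add:
  assumes "deriv_seq D" "deriv_seq E"
  shows "pconv (phi2 a b) (phi2 c d) (\<lambda>x. D 0 x + E 0 x)
           = pconv (phi2 a b) (phi2 c d) (D 0) + pconv (phi2 a b) (phi2 c d) (E 0)"
proof -
  have "phi2 c d (\<lambda>u. D 0 (y * u) + E 0 (y * u))
      = phi2_dilate_derivs c d D 0 y + phi2_dilate_derivs c d E 0 y" for y
    using phi2_add[OF deriv_seq_dilate_derivs[OF assms(1), of y]
        deriv_seq_dilate_derivs[OF assms(2), of y]]
    by (simp add: dilate_derivs_0 phi2_dilate_derivs_0)
  moreover have "phi2 a b (\<lambda>y. phi2_dilate_derivs c d D 0 y + phi2_dilate_derivs c d E 0 y)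
      = phi2 a b (phi2_dilate_derivs c d D 0) + phi2 a b (phi2_dilate_derivs c d E 0)"
    by (rule phi2_add[OF deriv_seq_phi2_dilate_derivs[OF assms(1)]
          deriv_seq_phi2_dilate_derivs[OF assms(2)]])
  ultimately show ?thesis
    by (simp add: pconv_def phi2_dilate_derivs_0)
qed

lemma pconv_phi2_bound:
  obtains K C where "\<And>D e. deriv_seq D \<Longrightarrow> (\<And>i x. i \<le> K \<Longrightarrow> x \<in> {0..1} \<Longrightarrow> norm (D i x) \<le> e) \<Longrightarrow>
      norm (pconv (phi2 a b) (phi2 c d) (D 0)) \<le> C * e"
proof
  define n where "n = phi2_depth a b"
  define m where "m = phi2_depth c d"
  define C' where "C' = (\<Sum>k\<le>n. norm (pochhammer (c + 1) k) * phi2_iter_bound m (c + of_nat k) d)"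
  fix D e assume D: "deriv_seq D" and bound: "\<And>i x. i \<le> n + m \<Longrightarrow> x \<in> {0..1} \<Longrightarrow> norm (D i x) \<le> e"
  have "norm (phi2 a b (phi2_dilate_derivs c d D 0)) \<le> phi2_iter_bound n a b * (C' * e)"
  proof (rule norm_phi2_le[OF deriv_seq_phi2_dilate_derivs[OF D]])
    show "2 \<le> n" "Re a > 1 - real n" "Re b > 1 - real n" using phi2_depth[of a b] by (simp_all add: n_def)
    fix k and y :: real assume k: "k \<le> n" and y: "y \<in> {0..1}"
    have m: "2 \<le> m" "Re (c + of_nat k) > 1 - real m" "Re d > 1 - real m"
      using phi2_depth[of c d] by (simp_all add: m_def)
    have "norm (D 0 0) \<le> e" by (rule bound) auto
    then have "e \<ge> 0" by (rule order_trans[OF norm_ge_zero])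
    have "norm (phi2_dilate_derivs c d D k y)
        \<le> norm (pochhammer (c + 1) k) * phi2_iter_bound m (c + of_nat k) d * e"
      by (rule norm_phi2_dilate_derivs_le[OF D m y]) (use k bound in auto)
    also have "\<dots> \<le> C' * e"
      unfolding C'_def using k \<open>e \<ge> 0\<close> phi2_iter_bound_nonneg
      by (intro mult_right_mono member_le_sum mult_nonneg_nonneg) simp_all
    finally show "norm (phi2_dilate_derivs c d D k y) \<le> C' * e" .
  qed
  then show "norm (pconv (phi2 a b) (phi2 c d) (D 0)) \<le> (phi2_iter_bound n a b * C') * e"
    by (simp add: pconv_def phi2_dilate_derivs_0 mult.assoc)
qed

lemma pconv_phi2_poly:
  "pconv (phi2 a b) (phi2 c d) (\<lambda>x. poly p (of_real x))
     = (\<Sum>i\<le>degree p. coeff p i * phi2 a b (\<lambda>x. of_real x ^ i) * phi2 c d (\<lambda>x. of_real x ^ i))"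
proof -
  have power: "poly_derivs (monom 1 i) 0 = (\<lambda>x. of_real x ^ i)" for i
    by (simp add: poly_derivs_def poly_monom fun_eq_iff)
  have sum: "phi2 a' b' (\<lambda>x. \<Sum>i\<le>degree p. w i * of_real x ^ i)
      = (\<Sum>i\<le>degree p. w i * phi2 a' b' (\<lambda>x. of_real x ^ i))" for a' b' w
    using phi2_sum[of "{..degree p}" "\<lambda>i. poly_derivs (monom 1 i)" a' b' w]
    by (simp add: deriv_seq_poly_derivs power)
  have "phi2 c d (\<lambda>u. poly p (of_real (y * u)))
      = (\<Sum>i\<le>degree p. (coeff p i * phi2 c d (\<lambda>x. of_real x ^ i)) * of_real y ^ i)" for y
    using sum[of c d "\<lambda>i. coeff p i * of_real y ^ i"]
    by (simp add: poly_altdef power_mult_distrib mult_ac)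
  then show ?thesis
    using sum[of a b "\<lambda>i. coeff p i * phi2 c d (\<lambda>x. of_real x ^ i)"]
    by (simp add: pconv_def mult_ac)
qed

lemma phi2_power_mult_phi2_power:
  "phi2 t (- t) (\<lambda>x. of_real x ^ i) * phi2 1 (t - 2) (\<lambda>x. of_real x ^ i) = rGamma (t + 1)"
proof -
  have "phi2 t (- t) (\<lambda>x. of_real x ^ i) * phi2 1 (t - 2) (\<lambda>x. of_real x ^ i)
      = (pochhammer (t + 1) i * rGamma (t + 1 + of_nat i)) * (pochhammer 2 i * rGamma (2 + of_nat i))"
    by (simp add: phi2_power algebra_simps)
  also have "\<dots> = rGamma (t + 1)"
    using pochhammer_rGamma[of "t + 1" i] pochhammer_rGamma[of "2::complex" i]
      rGamma_plus1[of "1::complex"]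
    by simp
  finally show ?thesis .
qed

lemma pconv_phi2_poly_eq_rGamma:
  "pconv (phi2 t (- t)) (phi2 1 (t - 2)) (\<lambda>x. poly p (of_real x)) = rGamma (t + 1) * poly p 1"
  unfolding pconv_phi2_poly
  by (simp add: phi2_power_mult_phi2_power mult.assoc poly_altdef sum_distrib_left mult_ac)

lemma pconv_phi2_eq_if_poly:
  assumes poly: "\<And>p. pconv (phi2 a b) (phi2 c d) (\<lambda>x. poly p (of_real x)) = w * poly p 1"
    and D: "deriv_seq D"
  shows "pconv (phi2 a b) (phi2 c d) (D 0) = w * D 0 1"
proof -
  obtain K C where bound: "\<And>D e. deriv_seq D \<Longrightarrow> (\<And>i x. i \<le> K \<Longrightarrow> x \<in> {0..1} \<Longrightarrow> norm (D i x) \<le> e) \<Longrightarrow>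
      norm (pconv (phi2 a b) (phi2 c d) (D 0)) \<le> C * e"
    using pconv_phi2_bound by blast
  have "norm (pconv (phi2 a b) (phi2 c d) (D 0) - w * D 0 1) \<le> (C + norm w) * e" if e: "e > 0" for e
  proof -
    obtain p where p: "\<And>i x. i \<le> K \<Longrightarrow> x \<in> {0..1} \<Longrightarrow> norm (D i x - poly_derivs p i x) \<le> e"
      using poly_approx_derivs[OF D e] by blast
    define G where "G i x = D i x - poly_derivs p i x" for i x
    have G: "deriv_seq G" unfolding G_def[abs_def] by (rule deriv_seq_diff[OF D deriv_seq_poly_derivs])
    have "pconv (phi2 a b) (phi2 c d) (D 0) - w * D 0 1 = pconv (phi2 a b) (phi2 c d) (G 0) - w * G 0 1"
      using pconv_phi2_add[OF G deriv_seq_poly_derivs, of a b c d p]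
      by (simp add: G_def poly_derivs_0 poly algebra_simps)
    moreover have "norm (pconv (phi2 a b) (phi2 c d) (G 0)) \<le> C * e"
      by (rule bound[OF G]) (use p in \<open>simp add: G_def\<close>)
    moreover have "norm (w * G 0 1) \<le> norm w * e"
      using p[of 0 1] unfolding norm_mult G_def by (intro mult_left_mono) auto
    ultimately show ?thesis
      using norm_triangle_ineq4[of "pconv (phi2 a b) (phi2 c d) (G 0)" "w * G 0 1"]
      by (simp add: distrib_right)
  qed
  then have "pconv (phi2 a b) (phi2 c d) (D 0) - w * D 0 1 = 0"
    by (rule eq_zero_if_norm_le_mult_epsilon)
  then show ?thesis by simp
qed

theorem lemma5p7:
  fixes t :: complex and \<psi> :: "real \<Rightarrow> complex"
  assumes "test_fun \<psi>"
  shows "pconv (phi2 t (- t)) (phi2 1 (t - 2)) \<psi> = rGamma (t + 1) * \<psi> 1"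
proof -
  obtain D where "deriv_seq D" "D 0 = \<psi>"
    using assms unfolding test_fun_def smooth_fun_iff_deriv_seq by blast
  then show ?thesis
    using pconv_phi2_eq_if_poly[OF pconv_phi2_poly_eq_rGamma] by blast
qed

end
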